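(* Let $\Gamma$, $v$, $\Lambda$ be as in the context and suppose $v_n/|\gamma_n|^2=o(P_n)$ as $n\to\infty$. If $\Lambda$ is a $v$-perturbation of $\Gamma$ of deficiency $1$, then $\Lambda$ is not a uniqueness sequence for $H_{(\Gamma,v)}$, i.e. there is a nonzero $a\in\ell^2_v$ such that $H_{(\Gamma,v)}a$ vanishes on $\Lambda$.
   Context: $\Gamma=(\gamma_n)_{n\ge1}$ are distinct complex numbers with $\inf_n|\gamma_{n+1}|/|\gamma_n|>1$; $v=(v_n)$ positive with $\sum_nv_n/(1+|\gamma_n|^2)<\infty$. $\ell^2_v=\{(a_n):\sum|a_n|^2v_n<\infty\}$; $H_{(\Gamma,v)}a(z)=\sum_na_nv_n/(z-\gamma_n)$, $z\in\mathbb{C}\setminus\Gamma$. $V_1=1$, $V_n=\sum_{j<n}v_j$; $P_n=\sum_{j>n}v_j/|\gamma_j|^2$. $\Omega_1=\{|z|<(|\gamma_1|+|\gamma_2|)/2\}$, $\Omega_n=\{(|\gamma_{n-1}|+|\gamma_n|)/2\le|z|<(|\gamma_n|+|\gamma_{n+1}|)/2\}$ ($n\ge2$); $D_n(v;M)=\{\lambda\in\Omega_n: Mv_n/|\lambda-\gamma_n|^2\ge\max(V_n/|\lambda|^2,P_n)\}$. $\Lambda$ is a sequence of distinct nonzero complex numbers disjoint from $\Gamma$, indexed $(\lambda_n)_{n\ge n_0}$ by consecutive integers with $|\lambda_n|$ increasing. $\Lambda$ is a $v$-perturbation of $\Gamma$ if $n_0$ can be chosen so that for some sufficiently large $M$,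 $\lambda_n\in D_n(v;M)$ for all but finitely many $n$; with this $n_0$, it is exact if $n_0=1$, of deficiency $n_0-1$ if $n_0>1$, of excess $1-n_0$ if $n_0<1$. *)

theory Defs
  imports "HOL-Analysis.Analysis" "HOL-Library.Landau_Symbols"
begin

text \<open>Sequences Gamma = (gamma n), v = (v n) are indexed by n >= 1; values at index 0 are ignored.\<close>

definition sep_ratio :: "(nat \<Rightarrow> complex) \<Rightarrow> bool" where
  "sep_ratio \<gamma> \<longleftrightarrow> (\<exists>q>1. \<forall>n\<ge>1. q * cmod (\<gamma> n) \<le> cmod (\<gamma> (Suc n)))"

definition weight_ok :: "(nat \<Rightarrow> complex) \<Rightarrow> (nat \<Rightarrow> real) \<Rightarrow> bool" where
  "weight_ok \<gamma> v \<longleftrightarrow> (\<forall>n\<ge>1. v n > 0) \<and>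
     summable (\<lambda>k. v (Suc k) / (1 + (cmod (\<gamma> (Suc k)))\<^sup>2))"

definition l2v :: "(nat \<Rightarrow> real) \<Rightarrow> (nat \<Rightarrow> complex) \<Rightarrow> bool" where
  "l2v v a \<longleftrightarrow> summable (\<lambda>k. (cmod (a (Suc k)))\<^sup>2 * v (Suc k))"

definition H_term :: "(nat \<Rightarrow> complex) \<Rightarrow> (nat \<Rightarrow> real) \<Rightarrow> (nat \<Rightarrow> complex) \<Rightarrow> complex \<Rightarrow> nat \<Rightarrow> complex" where
  "H_term \<gamma> v a z k = a (Suc k) * of_real (v (Suc k)) / (z - \<gamma> (Suc k))"

definition Vsum :: "(nat \<Rightarrow> real) \<Rightarrow> nat \<Rightarrow> real" where
  "Vsum v n = (if n \<le> 1 then 1 else (\<Sum>j\<in>{1..<n}. v j))"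

definition Ptail :: "(nat \<Rightarrow> complex) \<Rightarrow> (nat \<Rightarrow> real) \<Rightarrow> nat \<Rightarrow> real" where
  "Ptail \<gamma> v n = (\<Sum>k. v (n + 1 + k) / (cmod (\<gamma> (n + 1 + k)))\<^sup>2)"

definition Omega :: "(nat \<Rightarrow> complex) \<Rightarrow> nat \<Rightarrow> complex set" where
  "Omega \<gamma> n = (if n \<le> 1 then {z. cmod z < (cmod (\<gamma> 1) + cmod (\<gamma> 2)) / 2}
     else {z. (cmod (\<gamma> (n - 1)) + cmod (\<gamma> n)) / 2 \<le> cmod z \<and>
              cmod z < (cmod (\<gamma> n) + cmod (\<gamma> (Suc n))) / 2})"

definition Dset :: "(nat \<Rightarrow> complex) \<Rightarrow> (nat \<Rightarrow> real) \<Rightarrow> real \<Rightarrow> nat \<Rightarrow> complex set" where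
  "Dset \<gamma> v M n = {w\<in>Omega \<gamma> n.
      M * v n / (cmod (w - \<gamma> n))\<^sup>2 \<ge> max (Vsum v n / (cmod w)\<^sup>2) (Ptail \<gamma> v n)}"

end

theory Submission
  imports Defs "HOL-Computational_Algebra.Polynomial"
begin

text \<open>
  Let \<open>G(z) = (z - \<gamma>\<^sub>1)\<^sup>-\<^sup>1 \<Prod>[n \<ge> 2] (1 - z/\<lambda>\<^sub>n) / (1 - z/\<gamma>\<^sub>n)\<close>, which vanishes on \<open>\<Lambda>\<close>,
  let \<open>d\<^sub>k\<close> be its residue at \<open>\<gamma>\<^sub>k\<close> and take \<open>a\<^sub>k = d\<^sub>k / v\<^sub>k\<close>. Truncating the product at \<open>N\<close>
  gives a rational function whose numerator has one factor fewer than its denominator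
  (this is where deficiency \<open>1\<close> enters), so it equals its partial fraction expansion
  \<open>\<Sum>[k \<le> N] d\<^sub>k\<^sup>N / (z - \<gamma>\<^sub>k)\<close> (Lagrange interpolation); these finite sums vanish at
  \<open>\<lambda>\<^sub>2, \<dots>, \<lambda>\<^sub>N\<close>, and Tannery's theorem lets \<open>N \<rightarrow> \<infinity>\<close>.

  The estimates are driven by the relative errors \<open>\<epsilon>\<^sub>n = |\<lambda>\<^sub>n - \<gamma>\<^sub>n| / |\<lambda>\<^sub>n|\<close>. Membership in
  \<open>D\<^sub>n\<close> gives \<open>\<epsilon>\<^sub>n\<^sup>2 \<le> 4M v\<^sub>n / (|\<gamma>\<^sub>n|\<^sup>2 P\<^sub>n) \<rightarrow> 0\<close>, so by lacunarity \<open>|d\<^sub>k| \<le> X \<epsilon>\<^sub>k e\<^sup>\<delta>\<^sup>k\<close> for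
  every \<open>\<delta> > 0\<close>. The \<open>o(P\<^sub>n)\<close> hypothesis also makes \<open>P\<^sub>n\<close> decay subexponentially while \<open>|\<gamma>\<^sub>k|\<close>
  grows geometrically, hence \<open>\<Sum> |d\<^sub>k|\<^sup>2 / v\<^sub>k \<le> \<Sum> 4M X\<^sup>2 e\<^sup>2\<^sup>\<delta>\<^sup>k / (|\<gamma>\<^sub>k|\<^sup>2 P\<^sub>k) < \<infinity>\<close>.
\<close>

section \<open>Lagrange interpolation and elementary estimates\<close>

lemma lagrange_interpolation:
  fixes x :: "'b \<Rightarrow> 'a :: field" and p :: "'a poly"
  assumes fin: "finite S" and inj: "inj_on x S" and deg: "degree p < card S"
  shows "poly p z = (\<Sum>k\<in>S. poly p (x k) / (\<Prod>j\<in>S-{k}. x k - x j) * (\<Prod>j\<in>S-{k}. z - x j))"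
proof -
  define c where "c k = poly p (x k) / (\<Prod>j\<in>S-{k}. x k - x j)" for k
  define L where "L = (\<Sum>k\<in>S. smult (c k) (\<Prod>j\<in>S-{k}. [:- x j, 1:]))"
  have poly_L: "poly L w = (\<Sum>k\<in>S. c k * (\<Prod>j\<in>S-{k}. w - x j))" for w
    unfolding L_def by (simp add: poly_sum poly_prod)
  have "degree L \<le> card S - 1"
    unfolding L_def
  proof (rule degree_sum_le[OF fin])
    fix k assume k: "k \<in> S"
    have "degree (smult (c k) (\<Prod>j\<in>S-{k}. [:- x j, 1:])) \<le> sum (degree \<circ> (\<lambda>j. [:- x j, 1:])) (S-{k})"
      by (rule order_trans[OF degree_smult_le degree_prod_sum_le]) (use fin in auto)
    also have "\<dots> = card S - 1" using k fin by simp
    finally show "degree (smult (c k) (\<Prod>j\<in>S-{k}. [:- x j, 1:])) \<le> card S - 1" .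
  qed
  then have degree_L: "degree L < card S" using deg by linarith
  have "p = L"
  proof (rule poly_eqI_degree[where A = "x ` S"])
    fix w assume "w \<in> x ` S"
    then obtain i where i: "i \<in> S" "w = x i" by auto
    have "(\<Sum>k\<in>S-{i}. c k * (\<Prod>j\<in>S-{k}. x i - x j)) = 0"
      using i fin by (intro sum.neutral) auto
    then have "poly L (x i) = c i * (\<Prod>j\<in>S-{i}. x i - x j)"
      unfolding poly_L using i fin by (simp add: sum.remove)
    moreover have "(\<Prod>j\<in>S-{i}. x i - x j) \<noteq> 0" using i inj fin by (auto simp: inj_on_def)
    ultimately show "poly p w = poly L w" using i by (simp add: c_def)
  qed (use deg degree_L inj in \<open>simp_all add: card_image\<close>)
  then have "poly p z = (\<Sum>k\<in>S. c k * (\<Prod>j\<in>S-{k}. z - x j))" by (simp add: poly_L)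
  then show ?thesis by (simp add: c_def)
qed

lemma lagrange_partial_fractions:
  fixes x :: "'b \<Rightarrow> 'a :: field" and p :: "'a poly"
  assumes fin: "finite S" and inj: "inj_on x S" and deg: "degree p < card S" and z: "z \<notin> x ` S"
  shows "poly p z / (\<Prod>j\<in>S. z - x j) =
           (\<Sum>k\<in>S. poly p (x k) / ((\<Prod>j\<in>S-{k}. x k - x j) * (z - x k)))"
  unfolding lagrange_interpolation[OF fin inj deg, of z] sum_divide_distrib
proof (rule sum.cong[OF refl])
  fix k assume k: "k \<in> S"
  have split: "(\<Prod>j\<in>S. z - x j) = (z - x k) * (\<Prod>j\<in>S-{k}. z - x j)"
    using k fin by (simp add: prod.remove)
  have "(\<Prod>j\<in>S-{k}. z - x j) \<noteq> 0" using z fin by auto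
  then show "poly p (x k) / (\<Prod>j\<in>S-{k}. x k - x j) * (\<Prod>j\<in>S-{k}. z - x j) / (\<Prod>j\<in>S. z - x j) =
      poly p (x k) / ((\<Prod>j\<in>S-{k}. x k - x j) * (z - x k))"
    unfolding split by simp
qed

lemma norm_prod_le_exp_sum_norm_diff_one:
  fixes f :: "'a \<Rightarrow> 'b :: {real_normed_div_algebra, comm_ring_1}"
  shows "norm (\<Prod>x\<in>A. f x) \<le> exp (\<Sum>x\<in>A. norm (f x - 1))"
proof -
  have "norm (\<Prod>x\<in>A. f x) \<le> (\<Prod>x\<in>A. norm (f x))" by (rule norm_prod_le)
  also have "\<dots> \<le> (\<Prod>x\<in>A. 1 + norm (f x - 1))"
    using norm_triangle_ineq[of 1 "f x - 1" for x] by (intro prod_mono) auto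
  also have "\<dots> \<le> exp (\<Sum>x\<in>A. norm (f x - 1))" by (rule prod_le_exp_sum) simp
  finally show ?thesis .
qed

lemma sum_le_const_plus_linear_if_tendsto_zero:
  fixes e :: "nat \<Rightarrow> real"
  assumes "e \<longlonglongrightarrow> 0" and nonneg: "\<And>n. e n \<ge> 0" and "\<delta> > 0"
  shows "\<exists>C. \<forall>k. (\<Sum>i<k. e i) \<le> C + \<delta> * real k"
proof -
  obtain N where N: "\<And>n. n \<ge> N \<Longrightarrow> e n < \<delta>"
    using order_tendstoD(2)[OF assms(1) \<open>\<delta> > 0\<close>] by (auto simp: eventually_sequentially)
  have "(\<Sum>i<k. e i) \<le> (\<Sum>i<N. e i) + \<delta> * real k" for k
  proof (induction k)
    case (Suc k)
    show ?case
    proof (cases "k < N")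
      case True
      then have "(\<Sum>i<Suc k. e i) \<le> (\<Sum>i<N. e i)" by (intro sum_mono2) (auto simp: nonneg)
      moreover have "0 \<le> \<delta> * real (Suc k)" using \<open>\<delta> > 0\<close> by simp
      ultimately show ?thesis by linarith
    next
      case False
      then show ?thesis using Suc.IH N[of k] by (simp add: algebra_simps)
    qed
  qed (simp add: sum_nonneg nonneg)
  then show ?thesis by blast
qed

lemma summable_if_eventually_le_geometric:
  fixes t :: "nat \<Rightarrow> real"
  assumes "\<forall>\<^sub>F k in sequentially. norm (t k) \<le> K * r ^ k" "0 \<le> r" "r < 1"
  shows "summable t"
  using assms by (intro summable_comparison_test_ev[OF assms(1)] summable_mult summable_geometric) simp

section \<open>Lacunary sequences\<close>

locale lacunary =
  fixes \<gamma> :: "nat \<Rightarrow> complex" and q :: real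
  assumes ratio_gt_1: "q > 1"
    and growth: "\<And>n. n \<ge> 1 \<Longrightarrow> q * cmod (\<gamma> n) \<le> cmod (\<gamma> (Suc n))"
    and inj: "inj_on \<gamma> {1..}"
begin

lemma power_growth:
  assumes "1 \<le> n" "n \<le> k"
  shows "q ^ (k - n) * cmod (\<gamma> n) \<le> cmod (\<gamma> k)"
  using assms(2)
proof (induction k rule: dec_induct)
  case (step k)
  have "q ^ (Suc k - n) * cmod (\<gamma> n) = q * (q ^ (k - n) * cmod (\<gamma> n))"
    using step.hyps by (simp add: Suc_diff_le)
  also have "\<dots> \<le> q * cmod (\<gamma> k)" using step.IH ratio_gt_1 by simp
  also have "\<dots> \<le> cmod (\<gamma> (Suc k))" using growth step.hyps assms(1) by simp
  finally show ?case .
qed simp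

lemma gamma_distinct: "n \<ge> 1 \<Longrightarrow> k \<ge> 1 \<Longrightarrow> n \<noteq> k \<Longrightarrow> \<gamma> n \<noteq> \<gamma> k"
  using inj by (auto simp: inj_on_def)

lemma norm_gamma_2_pos: "cmod (\<gamma> 2) > 0"
proof -
  have "q * cmod (\<gamma> 1) \<le> cmod (\<gamma> 2)" using growth[of 1] by (simp add: numeral_2_eq_2)
  moreover have "\<gamma> 1 \<noteq> \<gamma> 2" using gamma_distinct[of 1 2] by simp
  ultimately show ?thesis using ratio_gt_1 by (smt (verit) mult_pos_pos zero_less_norm_iff)
qed

lemma gamma_nonzero: "n \<ge> 2 \<Longrightarrow> \<gamma> n \<noteq> 0"
  using power_growth[of 2 n] norm_gamma_2_pos ratio_gt_1
  by (smt (verit) norm_zero one_le_numeral zero_less_mult_iff zero_less_power)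

lemma eventually_norm_ge: "\<forall>\<^sub>F n in sequentially. c \<le> cmod (\<gamma> n)"
proof -
  obtain N where N: "c / cmod (\<gamma> 2) < q ^ N" using real_arch_pow[OF ratio_gt_1] by blast
  show ?thesis unfolding eventually_sequentially
  proof (intro exI allI impI)
    fix n assume n: "n \<ge> N + 2"
    have "c < q ^ N * cmod (\<gamma> 2)" using N norm_gamma_2_pos by (simp add: field_simps)
    also have "\<dots> \<le> q ^ (n - 2) * cmod (\<gamma> 2)"
      using n ratio_gt_1 by (intro mult_right_mono power_increasing) auto
    also have "\<dots> \<le> cmod (\<gamma> n)" using power_growth[of 2 n] n by simp
    finally show "c \<le> cmod (\<gamma> n)" by simp
  qed
qed

lemma inverse_norm_le_geometric:
  assumes "k \<ge> 2"
  shows "1 / cmod (\<gamma> k) \<le> (q\<^sup>2 / cmod (\<gamma> 2)) * (1/q) ^ k"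
proof -
  have "q ^ k = q\<^sup>2 * q ^ (k - 2)" using assms by (metis le_add_diff_inverse power_add)
  then have "q ^ k * cmod (\<gamma> 2) / q\<^sup>2 \<le> cmod (\<gamma> k)"
    using power_growth[of 2 k] assms ratio_gt_1 by (simp add: field_simps)
  moreover have "q ^ k * cmod (\<gamma> 2) / q\<^sup>2 > 0" using ratio_gt_1 norm_gamma_2_pos by simp
  ultimately have "1 / cmod (\<gamma> k) \<le> 1 / (q ^ k * cmod (\<gamma> 2) / q\<^sup>2)"
    by (intro frac_le) auto
  also have "\<dots> = (q\<^sup>2 / cmod (\<gamma> 2)) * (1/q) ^ k" by (simp add: field_simps)
  finally show ?thesis .
qed

definition Q :: real where "Q = q / (q - 1)"

lemma Q_gt_1: "Q > 1"
  using ratio_gt_1 by (simp add: Q_def)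

lemma geometric_sums_Q: "(\<lambda>n. (1/q) ^ n) sums Q"
proof -
  have "(\<lambda>n. (1/q) ^ n) sums (1 / (1 - 1/q))" using ratio_gt_1 by (intro geometric_sums) simp
  also have "1 / (1 - 1/q) = Q" using ratio_gt_1 by (simp add: Q_def field_simps)
  finally show ?thesis .
qed

lemma norm_diff_ge_fraction:
  assumes "q * cmod y \<le> cmod x"
  shows "cmod x * (1 - 1/q) \<le> cmod (x - y)"
proof -
  have "q * (cmod x - cmod y) \<le> q * cmod (x - y)"
    using norm_triangle_ineq2[of x y] ratio_gt_1 by (intro mult_left_mono) auto
  then show ?thesis using assms ratio_gt_1 by (simp add: field_simps)
qed

lemma ratio_bound_below:
  assumes "1 \<le> n" "n < k"
  shows "cmod (\<gamma> k) / cmod (\<gamma> n - \<gamma> k) \<le> Q"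
proof -
  have "q \<le> q ^ (k - n)" using ratio_gt_1 assms by (simp add: power_increasing[of 1 "k-n" q, simplified])
  then have "q * cmod (\<gamma> n) \<le> cmod (\<gamma> k)"
    using power_growth assms by (meson less_imp_le mult_right_mono norm_ge_zero order_trans)
  then have "cmod (\<gamma> k) * (1 - 1/q) \<le> cmod (\<gamma> n - \<gamma> k)"
    using norm_diff_ge_fraction[of "\<gamma> n" "\<gamma> k"] by (simp add: norm_minus_commute)
  moreover have "cmod (\<gamma> k) > 0" using gamma_nonzero[of k] assms by simp
  ultimately have "cmod (\<gamma> k) / cmod (\<gamma> n - \<gamma> k) \<le> cmod (\<gamma> k) / (cmod (\<gamma> k) * (1 - 1/q))"
    using ratio_gt_1 by (intro frac_le) auto
  also have "\<dots> = Q" using \<open>cmod (\<gamma> k) > 0\<close> ratio_gt_1 by (simp add: Q_def field_simps)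
  finally show ?thesis .
qed

lemma ratio_bound_above:
  assumes "1 \<le> k" "k < n"
  shows "cmod (\<gamma> k) / cmod (\<gamma> n - \<gamma> k) \<le> Q * (1/q) ^ (n - k)"
proof -
  have gap: "q ^ (n - k) * cmod (\<gamma> k) \<le> cmod (\<gamma> n)" using power_growth assms by simp
  have "q \<le> q ^ (n - k)" using ratio_gt_1 assms by (simp add: power_increasing[of 1 "n-k" q, simplified])
  then have "q * cmod (\<gamma> k) \<le> cmod (\<gamma> n)"
    using gap by (meson mult_right_mono norm_ge_zero order_trans)
  then have "cmod (\<gamma> n) * (1 - 1/q) \<le> cmod (\<gamma> n - \<gamma> k)" by (rule norm_diff_ge_fraction)
  moreover have "cmod (\<gamma> k) \<le> cmod (\<gamma> n) / q ^ (n - k)"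
    using gap ratio_gt_1 by (simp add: field_simps)
  moreover have "cmod (\<gamma> n) > 0" using gamma_nonzero[of n] assms by simp
  ultimately have "cmod (\<gamma> k) / cmod (\<gamma> n - \<gamma> k) \<le> (cmod (\<gamma> n) / q ^ (n - k)) / (cmod (\<gamma> n) * (1 - 1/q))"
    using ratio_gt_1 by (intro frac_le) auto
  also have "\<dots> = Q * (1/q) ^ (n - k)"
    using \<open>cmod (\<gamma> n) > 0\<close> ratio_gt_1 by (simp add: Q_def field_simps)
  finally show ?thesis .
qed

end

section \<open>Tails of the weights and relative errors\<close>

locale perturbation = lacunary \<gamma> q
  for \<gamma> :: "nat \<Rightarrow> complex" and q :: real +
  fixes v :: "nat \<Rightarrow> real" and \<Lambda> :: "nat \<Rightarrow> complex" and M :: real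
  assumes weight_pos: "\<And>n. n \<ge> 1 \<Longrightarrow> v n > 0"
    and weight_summable: "summable (\<lambda>k. v (Suc k) / (1 + (cmod (\<gamma> (Suc k)))\<^sup>2))"
    and small_o: "(\<lambda>n. v n / (cmod (\<gamma> n))\<^sup>2) \<in> o(Ptail \<gamma> v)"
    and Lambda_nonzero: "\<And>n. n \<ge> 2 \<Longrightarrow> \<Lambda> n \<noteq> 0"
    and Lambda_not_gamma: "\<And>n m. n \<ge> 2 \<Longrightarrow> m \<ge> 1 \<Longrightarrow> \<Lambda> n \<noteq> \<gamma> m"
    and Lambda_in_Dset: "\<forall>\<^sub>F n in sequentially. \<Lambda> n \<in> Dset \<gamma> v M n"
begin

abbreviation P :: "nat \<Rightarrow> real" where "P \<equiv> Ptail \<gamma> v"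

definition w :: "nat \<Rightarrow> real" where "w n = v n / (cmod (\<gamma> n))\<^sup>2"

lemma w_pos: "n \<ge> 2 \<Longrightarrow> w n > 0"
  using weight_pos[of n] gamma_nonzero[of n] by (simp add: w_def)

lemma w_nonneg: "n \<ge> 1 \<Longrightarrow> w n \<ge> 0"
  using weight_pos[of n] by (simp add: w_def)

lemma summable_w_Suc: "summable (\<lambda>k. w (Suc k))"
proof (rule summable_comparison_test_ev)
  show "summable (\<lambda>k. 2 * (v (Suc k) / (1 + (cmod (\<gamma> (Suc k)))\<^sup>2)))"
    using weight_summable by (rule summable_mult)
  have "\<forall>\<^sub>F k in sequentially. 1 \<le> cmod (\<gamma> (Suc k))"
    using eventually_norm_ge[of 1] by (rule eventually_sequentially_Suc[THEN iffD2])
  then show "\<forall>\<^sub>F k in sequentially. norm (w (Suc k)) \<le> 2 * (v (Suc k) / (1 + (cmod (\<gamma> (Suc k)))\<^sup>2))"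
  proof eventually_elim
    case (elim k)
    have "v (Suc k) > 0" using weight_pos by simp
    moreover have "(cmod (\<gamma> (Suc k)))\<^sup>2 \<ge> 1" using elim by simp
    ultimately have "v (Suc k) / (cmod (\<gamma> (Suc k)))\<^sup>2 \<le> v (Suc k) / ((1 + (cmod (\<gamma> (Suc k)))\<^sup>2) / 2)"
      by (intro divide_left_mono mult_pos_pos) auto
    then show ?case using \<open>v (Suc k) > 0\<close> by (simp add: w_def mult.commute)
  qed
qed

lemma Ptail_eq_suminf_w: "P n = (\<Sum>k. w (n + 1 + k))"
  unfolding Ptail_def w_def ..

lemma summable_w_tail: "summable (\<lambda>k. w (n + 1 + k))"
  using summable_ignore_initial_segment[OF summable_w_Suc, of n] by (simp add: add.commute)

lemma Ptail_Suc: "P n = w (Suc n) + P (Suc n)"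
  using suminf_split_head[OF summable_w_tail[of n]] by (simp add: Ptail_eq_suminf_w)

lemma Ptail_nonneg: "P n \<ge> 0"
  unfolding Ptail_eq_suminf_w by (rule suminf_nonneg[OF summable_w_tail]) (simp add: w_nonneg)

lemma Ptail_pos: "n \<ge> 1 \<Longrightarrow> P n > 0"
  using Ptail_Suc[of n] Ptail_nonneg[of "Suc n"] w_pos[of "Suc n"] by simp

lemma w_div_Ptail_tendsto_0: "(\<lambda>n. w n / P n) \<longlonglongrightarrow> 0"
  using smalloD_tendsto[OF small_o] by (simp add: w_def)

text \<open>Eventually \<open>P n = w (n + 1) + P (n + 1) \<le> (1 + \<delta>) P (n + 1)\<close>.\<close>

lemma inverse_Ptail_le_exponential:
  assumes "\<delta> > 0"
  shows "\<exists>C N. \<forall>k\<ge>N. 1 / P k \<le> C * (1 + \<delta>) ^ k"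
proof -
  have "\<forall>\<^sub>F n in sequentially. w n \<le> \<delta> * P n"
    using landau_o.smallD[OF small_o assms] eventually_ge_at_top[of 1]
    by eventually_elim (simp add: w_def[symmetric] w_nonneg Ptail_nonneg)
  then obtain N where N: "\<And>n. n \<ge> N \<Longrightarrow> w n \<le> \<delta> * P n"
    by (auto simp: eventually_sequentially)
  define N' where "N' = N + 1"
  have decay: "P N' \<le> (1 + \<delta>) ^ (k - N') * P k" if "k \<ge> N'" for k
    using that
  proof (induction k rule: dec_induct)
    case (step k)
    have "P k \<le> (1 + \<delta>) * P (Suc k)"
      using Ptail_Suc[of k] N[of "Suc k"] step.hyps by (simp add: N'_def algebra_simps)
    then have "(1 + \<delta>) ^ (k - N') * P k \<le> (1 + \<delta>) ^ (Suc k - N') * P (Suc k)"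
      using assms step.hyps by (simp add: Suc_diff_le mult_left_mono)
    then show ?case using step.IH by simp
  qed simp
  have "1 / P k \<le> (1 / P N') * (1 + \<delta>) ^ k" if "k \<ge> N'" for k
  proof -
    have "(1 + \<delta>) ^ (k - N') * P k \<le> (1 + \<delta>) ^ k * P k"
      using assms Ptail_nonneg[of k] by (intro mult_right_mono power_increasing) auto
    then have "P N' \<le> (1 + \<delta>) ^ k * P k" using decay[OF that] by linarith
    then show ?thesis using Ptail_pos[of k] Ptail_pos[of N'] that by (simp add: N'_def field_simps)
  qed
  then show ?thesis by blast
qed

definition err :: "nat \<Rightarrow> real" where
  "err n = (if n \<ge> 2 then cmod (\<Lambda> n - \<gamma> n) / cmod (\<Lambda> n) else 0)"

lemma err_nonneg: "err n \<ge> 0"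
  by (simp add: err_def)

lemma eventually_err_sq_le: "\<forall>\<^sub>F n in sequentially. (err n)\<^sup>2 \<le> 4 * M * (w n / P n)"
  using Lambda_in_Dset eventually_ge_at_top[of 2]
proof eventually_elim
  case (elim n)
  then have n: "n \<ge> 2"
    and Omega_bound: "(cmod (\<gamma> (n - 1)) + cmod (\<gamma> n)) / 2 \<le> cmod (\<Lambda> n)"
    and Dset_bound: "M * v n / (cmod (\<Lambda> n - \<gamma> n))\<^sup>2 \<ge> P n"
    by (auto simp: Dset_def Omega_def)
  have "cmod (\<gamma> n) > 0" using gamma_nonzero[OF n] by simp
  have "cmod (\<Lambda> n - \<gamma> n) > 0" using Lambda_not_gamma[OF n, of n] n by simp
  then have near: "(cmod (\<Lambda> n - \<gamma> n))\<^sup>2 \<le> M * v n / P n"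
    using Dset_bound Ptail_pos[of n] n by (simp add: field_simps)
  have "cmod (\<gamma> n) / 2 \<le> cmod (\<Lambda> n)" by (rule order_trans[OF _ Omega_bound]) simp
  then have "(cmod (\<gamma> n) / 2)\<^sup>2 \<le> (cmod (\<Lambda> n))\<^sup>2" by (intro power_mono) auto
  then have far: "(cmod (\<gamma> n))\<^sup>2 / 4 \<le> (cmod (\<Lambda> n))\<^sup>2" by (simp add: power_divide)
  have "(err n)\<^sup>2 = (cmod (\<Lambda> n - \<gamma> n))\<^sup>2 / (cmod (\<Lambda> n))\<^sup>2"
    using n by (simp add: err_def power_divide)
  also have "\<dots> \<le> (M * v n / P n) / ((cmod (\<gamma> n))\<^sup>2 / 4)"
    using near far \<open>cmod (\<gamma> n) > 0\<close> order_trans[OF zero_le_power2 near] by (intro frac_le) auto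
  also have "\<dots> = 4 * M * (w n / P n)" by (simp add: w_def field_simps)
  finally show ?case .
qed

lemma err_tendsto_0: "err \<longlonglongrightarrow> 0"
proof (rule tendsto_sandwich[where f = "\<lambda>_. 0" and h = "\<lambda>n. sqrt (4 * M * (w n / P n))"])
  show "\<forall>\<^sub>F n in sequentially. err n \<le> sqrt (4 * M * (w n / P n))"
    using eventually_err_sq_le by eventually_elim (metis real_le_rsqrt)
  show "(\<lambda>n. sqrt (4 * M * (w n / P n))) \<longlonglongrightarrow> 0"
    using tendsto_real_sqrt[OF tendsto_mult_right_zero[OF w_div_Ptail_tendsto_0, of "4 * M"]] by simp
qed (simp_all add: err_nonneg)

definition err_bound :: real where "err_bound = (SUP n. err n)"

lemma err_le_err_bound: "err n \<le> err_bound"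
  unfolding err_bound_def
  by (rule cSUP_upper[OF UNIV_I Bseq_bdd_above[OF convergent_imp_Bseq]])
    (use err_tendsto_0 in \<open>auto intro: convergentI\<close>)

lemma err_bound_nonneg: "err_bound \<ge> 0"
  using err_le_err_bound[of 0] err_nonneg[of 0] by simp

section \<open>Residues of the generating product\<close>

text \<open>\<open>coef k\<close> is the residue of \<open>G\<close> at \<open>\<gamma>\<^sub>k\<close>: \<open>factor k n\<close> is the \<open>n\<close>-th factor of the
  product evaluated at \<open>\<gamma>\<^sub>k\<close>, and \<open>lead_factor k\<close> is the residue of the \<open>k\<close>-th factor
  times \<open>(\<gamma>\<^sub>k - \<gamma>\<^sub>1)\<^sup>-\<^sup>1\<close>.\<close>

definition factor :: "nat \<Rightarrow> nat \<Rightarrow> complex" where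
  "factor k n = (if 2 \<le> n \<and> n \<noteq> k then (\<gamma> k - \<Lambda> n) * \<gamma> n / (\<Lambda> n * (\<gamma> k - \<gamma> n)) else 1)"

definition lead_factor :: "nat \<Rightarrow> complex" where
  "lead_factor k = (if k = 1 then 1 else (\<gamma> k - \<Lambda> k) * \<gamma> k / (\<Lambda> k * (\<gamma> k - \<gamma> 1)))"

definition coef_partial :: "nat \<Rightarrow> nat \<Rightarrow> complex" where
  "coef_partial k N = lead_factor k * (\<Prod>n\<le>N. factor k n)"

definition coef :: "nat \<Rightarrow> complex" where
  "coef k = lead_factor k * prodinf (factor k)"

lemma norm_factor_minus_1:
  assumes "k \<ge> 1" "2 \<le> n" "n \<noteq> k"
  shows "norm (factor k n - 1) = err n * (cmod (\<gamma> k) / cmod (\<gamma> n - \<gamma> k))"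
proof -
  have "\<Lambda> n \<noteq> 0" "\<gamma> k - \<gamma> n \<noteq> 0" using Lambda_nonzero gamma_distinct[of k n] assms by auto
  then have "factor k n - 1 = \<gamma> k * (\<gamma> n - \<Lambda> n) / (\<Lambda> n * (\<gamma> k - \<gamma> n))"
    using assms by (simp add: factor_def field_simps)
  then show ?thesis
    using assms by (simp add: err_def norm_mult norm_divide norm_minus_commute)
qed

definition factor_dev_bound :: "nat \<Rightarrow> nat \<Rightarrow> real" where
  "factor_dev_bound k n = (if n < k then Q * err n else Q * err_bound * (1/q) ^ (n - k))"

lemma factor_dev_bound_nonneg: "factor_dev_bound k n \<ge> 0"
  using Q_gt_1 err_bound_nonneg ratio_gt_1 err_nonneg[of n] by (simp add: factor_dev_bound_def)

lemma norm_factor_minus_1_le: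
  assumes k: "k \<ge> 1"
  shows "norm (factor k n - 1) \<le> factor_dev_bound k n"
proof (cases "2 \<le> n \<and> n \<noteq> k")
  case True
  then have dev: "norm (factor k n - 1) = err n * (cmod (\<gamma> k) / cmod (\<gamma> n - \<gamma> k))"
    using norm_factor_minus_1 k by simp
  show ?thesis
  proof (cases "n < k")
    case True
    then have "err n * (cmod (\<gamma> k) / cmod (\<gamma> n - \<gamma> k)) \<le> err n * Q"
      using ratio_bound_below[of n k] \<open>2 \<le> n \<and> n \<noteq> k\<close> err_nonneg by (intro mult_left_mono) auto
    then show ?thesis using True dev by (simp add: factor_dev_bound_def mult.commute)
  next
    case False
    then have "err n * (cmod (\<gamma> k) / cmod (\<gamma> n - \<gamma> k)) \<le> err_bound * (Q * (1/q) ^ (n - k))"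
      using ratio_bound_above[OF k, of n] \<open>2 \<le> n \<and> n \<noteq> k\<close> err_le_err_bound err_nonneg
        err_bound_nonneg
      by (intro mult_mono) auto
    then show ?thesis using False dev by (simp add: factor_dev_bound_def mult_ac)
  qed
next
  case False
  then show ?thesis using factor_dev_bound_nonneg by (auto simp: factor_def)
qed

definition factor_dev_total :: "nat \<Rightarrow> real" where
  "factor_dev_total k = Q * (\<Sum>i<k. err i) + Q * err_bound * Q"

lemma factor_dev_bound_sums: "factor_dev_bound k sums factor_dev_total k"
proof -
  have "(\<lambda>n. factor_dev_bound k (n + k)) sums (Q * err_bound * Q)"
    using sums_mult[OF geometric_sums_Q, of "Q * err_bound"] by (simp add: factor_dev_bound_def)
  moreover have "(\<Sum>i<k. factor_dev_bound k i) = Q * (\<Sum>i<k. err i)"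
    by (simp add: factor_dev_bound_def sum_distrib_left)
  ultimately show ?thesis by (simp add: sums_iff_shift factor_dev_total_def add.commute)
qed

lemma convergent_prod_factor:
  assumes "k \<ge> 1"
  shows "convergent_prod (factor k)"
proof (intro abs_convergent_prod_imp_convergent_prod summable_imp_abs_convergent_prod)
  show "summable (\<lambda>n. norm (factor k n - 1))"
    using norm_factor_minus_1_le[OF assms]
    by (intro summable_comparison_test[OF _ sums_summable[OF factor_dev_bound_sums]]) auto
qed

lemma norm_partial_factor_prod_le:
  assumes "k \<ge> 1"
  shows "norm (\<Prod>n\<le>N. factor k n) \<le> exp (factor_dev_total k)"
proof -
  have "(\<Sum>n\<le>N. norm (factor k n - 1)) \<le> (\<Sum>n<Suc N. factor_dev_bound k n)"
    using norm_factor_minus_1_le[OF assms] by (simp add: lessThan_Suc_atMost sum_mono)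
  also have "\<dots> \<le> factor_dev_total k"
    unfolding sums_unique[OF factor_dev_bound_sums]
    by (intro sum_le_suminf[OF sums_summable[OF factor_dev_bound_sums]] factor_dev_bound_nonneg) auto
  finally show ?thesis
    using norm_prod_le_exp_sum_norm_diff_one[of "factor k" "{..N}"] by (meson exp_le_cancel_iff order_trans)
qed

definition coef_bound :: "nat \<Rightarrow> real" where
  "coef_bound k = norm (lead_factor k) * exp (factor_dev_total k)"

lemma coef_bound_nonneg: "coef_bound k \<ge> 0"
  by (simp add: coef_bound_def)

lemma norm_coef_partial_le: "k \<ge> 1 \<Longrightarrow> norm (coef_partial k N) \<le> coef_bound k"
  unfolding coef_partial_def coef_bound_def norm_mult
  by (intro mult_left_mono norm_partial_factor_prod_le) auto

lemma coef_partial_tendsto: "k \<ge> 1 \<Longrightarrow> coef_partial k \<longlonglongrightarrow> coef k"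
  unfolding coef_partial_def[abs_def] coef_def
  by (intro tendsto_mult_left convergent_prod_LIMSEQ convergent_prod_factor)

lemma norm_coef_le: "k \<ge> 1 \<Longrightarrow> norm (coef k) \<le> coef_bound k"
  by (rule LIMSEQ_le_const2[OF tendsto_norm[OF coef_partial_tendsto]]) (use norm_coef_partial_le in auto)

lemma coef_1_nonzero: "coef 1 \<noteq> 0"
proof -
  have "factor 1 n \<noteq> 0" for n
    using Lambda_not_gamma[of n 1] gamma_nonzero[of n] Lambda_nonzero[of n] gamma_distinct[of 1 n]
    by (auto simp: factor_def)
  then have "prodinf (factor 1) \<noteq> 0" by (intro prodinf_nonzero convergent_prod_factor) auto
  then show ?thesis by (simp add: coef_def lead_factor_def)
qed

lemma norm_lead_factor_le: "k \<ge> 2 \<Longrightarrow> norm (lead_factor k) \<le> Q * err k"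
proof -
  assume k: "k \<ge> 2"
  have "norm (lead_factor k) = err k * (cmod (\<gamma> k) / cmod (\<gamma> 1 - \<gamma> k))"
    using k by (simp add: lead_factor_def err_def norm_mult norm_divide norm_minus_commute)
  also have "\<dots> \<le> err k * Q"
    using ratio_bound_below[of 1 k] k err_nonneg[of k] by (intro mult_left_mono) auto
  finally show ?thesis by (simp add: mult.commute)
qed


lemma coef_partial_eq_lagrange_coefficient:
  assumes k: "k \<in> {1..N}"
  shows "(\<Prod>n\<in>{2..N}. \<gamma> n / \<Lambda> n) * (\<Prod>n\<in>{2..N}. \<gamma> k - \<Lambda> n) / (\<Prod>j\<in>{1..N}-{k}. \<gamma> k - \<gamma> j)
           = coef_partial k N"
proof -
  define g where "g n = (\<gamma> k - \<Lambda> n) * (\<gamma> n / \<Lambda> n)" for n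
  have numerator: "(\<Prod>n\<in>{2..N}. \<gamma> n / \<Lambda> n) * (\<Prod>n\<in>{2..N}. \<gamma> k - \<Lambda> n) = (\<Prod>n\<in>{2..N}. g n)"
    unfolding g_def prod.distrib by (simp add: mult.commute)
  have "(\<Prod>n\<le>N. factor k n) = (\<Prod>n\<in>{..N} \<inter> {n. 2 \<le> n \<and> n \<noteq> k}. g n / (\<gamma> k - \<gamma> n))"
    by (subst prod.inter_restrict) (auto simp: factor_def g_def intro!: prod.cong)
  also have "{..N} \<inter> {n. 2 \<le> n \<and> n \<noteq> k} = {2..N} - {k}" by auto
  finally have factors: "(\<Prod>n\<le>N. factor k n) = (\<Prod>n\<in>{2..N}-{k}. g n / (\<gamma> k - \<gamma> n))" .
  show ?thesis
  proof (cases "k = 1")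
    case True
    then have "{1..N} - {k} = {2..N}" "{2..N} - {k} = {2..N}" by auto
    with True show ?thesis
      unfolding numerator coef_partial_def factors by (simp add: lead_factor_def prod_dividef)
  next
    case False
    then have k2: "k \<ge> 2" "k \<le> N" using k by auto
    have "(\<Prod>n\<in>{2..N}. g n) = g k * (\<Prod>n\<in>{2..N}-{k}. g n)"
      using k2 by (intro prod.remove) auto
    moreover have "(\<Prod>j\<in>{1..N}-{k}. \<gamma> k - \<gamma> j) = (\<gamma> k - \<gamma> 1) * (\<Prod>j\<in>({1..N}-{k})-{1}. \<gamma> k - \<gamma> j)"
      using k2 by (intro prod.remove) auto
    moreover have "({1..N}-{k})-{1} = {2..N}-{k}" by auto
    ultimately have "(\<Prod>n\<in>{2..N}. g n) / (\<Prod>j\<in>{1..N}-{k}. \<gamma> k - \<gamma> j)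
        = (g k / (\<gamma> k - \<gamma> 1)) * (\<Prod>n\<in>{2..N}-{k}. g n / (\<gamma> k - \<gamma> n))"
      by (simp add: prod_dividef)
    moreover have "g k / (\<gamma> k - \<gamma> 1) = lead_factor k" using False by (simp add: lead_factor_def g_def)
    ultimately show ?thesis unfolding numerator coef_partial_def factors by argo
  qed
qed

text \<open>Lagrange interpolation of \<open>\<Prod>[n = 2..N] (z - \<lambda>\<^sub>n)\<close> at the nodes \<open>\<gamma>\<^sub>1, \<dots>, \<gamma>\<^sub>N\<close>.\<close>

lemma sum_coef_partial_eq_0:
  assumes m: "2 \<le> m" "m \<le> N"
  shows "(\<Sum>k\<in>{1..N}. coef_partial k N / (\<Lambda> m - \<gamma> k)) = 0"
proof -
  define p where "p = (\<Prod>n\<in>{2..N}. [:- \<Lambda> n, 1:])"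
  define K where "K = (\<Prod>n\<in>{2..N}. \<gamma> n / \<Lambda> n)"
  have poly_p: "poly p z = (\<Prod>n\<in>{2..N}. z - \<Lambda> n)" for z
    unfolding p_def poly_prod by simp
  have "degree p \<le> sum (degree \<circ> (\<lambda>n. [:- \<Lambda> n, 1:])) {2..N}"
    unfolding p_def by (rule degree_prod_sum_le) simp
  then have degree_p: "degree p < card {1..N}" using m by simp
  have "inj_on \<gamma> {1..N}" using inj by (rule inj_on_subset) auto
  moreover have "\<Lambda> m \<notin> \<gamma> ` {1..N}" using Lambda_not_gamma m by auto
  ultimately have "(\<Sum>k\<in>{1..N}. poly p (\<gamma> k) / ((\<Prod>j\<in>{1..N}-{k}. \<gamma> k - \<gamma> j) * (\<Lambda> m - \<gamma> k)))
      = poly p (\<Lambda> m) / (\<Prod>j\<in>{1..N}. \<Lambda> m - \<gamma> j)"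
    using lagrange_partial_fractions[OF _ _ degree_p] by simp
  also have "poly p (\<Lambda> m) = 0" unfolding poly_p using m by (intro prod_zero) auto
  finally have "0 = K * (\<Sum>k\<in>{1..N}. poly p (\<gamma> k) / ((\<Prod>j\<in>{1..N}-{k}. \<gamma> k - \<gamma> j) * (\<Lambda> m - \<gamma> k)))"
    by simp
  also have "\<dots> = (\<Sum>k\<in>{1..N}. coef_partial k N / (\<Lambda> m - \<gamma> k))"
    unfolding sum_distrib_left
    by (intro sum.cong refl, subst coef_partial_eq_lagrange_coefficient[symmetric])
      (simp_all add: K_def poly_p)
  finally show ?thesis by simp
qed

lemma coef_bound_le_exponential:
  assumes "\<delta> > 0"
  shows "\<exists>X\<ge>0. \<forall>k\<ge>2. coef_bound k \<le> X * err k * exp (Q * \<delta>) ^ k"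
proof -
  obtain C where C: "\<And>k. (\<Sum>i<k. err i) \<le> C + \<delta> * real k"
    using sum_le_const_plus_linear_if_tendsto_zero[OF err_tendsto_0 err_nonneg assms] by blast
  define X0 where "X0 = exp (Q * C + Q * err_bound * Q)"
  have "coef_bound k \<le> Q * X0 * err k * exp (Q * \<delta>) ^ k" if k: "k \<ge> 2" for k
  proof -
    have "Q * (\<Sum>i<k. err i) \<le> Q * (C + \<delta> * real k)" using C[of k] Q_gt_1 by simp
    then have "exp (factor_dev_total k) \<le> exp (Q * C + Q * err_bound * Q + real k * (Q * \<delta>))"
      by (simp add: factor_dev_total_def algebra_simps)
    also have "\<dots> = X0 * exp (Q * \<delta>) ^ k" by (simp add: X0_def exp_add exp_of_nat_mult)
    finally have "norm (lead_factor k) * exp (factor_dev_total k) \<le> (Q * err k) * (X0 * exp (Q * \<delta>) ^ k)"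
      using norm_lead_factor_le[OF k] Q_gt_1 err_nonneg[of k] by (intro mult_mono) auto
    then show ?thesis by (simp add: coef_bound_def mult_ac)
  qed
  moreover have "Q * X0 \<ge> 0" using Q_gt_1 by (simp add: X0_def)
  ultimately show ?thesis by blast
qed

lemma exists_small_exponent: "\<exists>\<delta>>0. exp (2 * Q * \<delta>) * (1 + \<delta>) < q"
proof -
  have "((\<lambda>\<delta>. exp (2 * Q * \<delta>) * (1 + \<delta>)) \<longlongrightarrow> 1) (at_right 0)"
    by (auto intro!: tendsto_eq_intros)
  then have "\<forall>\<^sub>F \<delta> in at_right 0. exp (2 * Q * \<delta>) * (1 + \<delta>) < q"
    using ratio_gt_1 by (rule order_tendstoD)
  with eventually_at_right_less have "\<forall>\<^sub>F \<delta> in at_right 0. \<delta> > 0 \<and> exp (2 * Q * \<delta>) * (1 + \<delta>) < q"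
    by (rule eventually_conj)
  then show ?thesis using eventually_happens'[OF trivial_limit_at_right_real] by blast
qed


section \<open>Summability of the coefficients\<close>

lemma M_pos: "M > 0"
proof -
  obtain n where n: "n \<ge> 2" "\<Lambda> n \<in> Dset \<gamma> v M n"
    using eventually_happens'[OF sequentially_bot eventually_conj[OF Lambda_in_Dset eventually_ge_at_top[of 2]]]
    by blast
  then have "0 < M * v n / (cmod (\<Lambda> n - \<gamma> n))\<^sup>2"
    using Ptail_pos[of n] by (auto simp: Dset_def)
  then show ?thesis using weight_pos[of n] n by (simp add: zero_less_divide_iff zero_less_mult_iff)
qed

lemma eventually_err_sq_div_weight_le:
  "\<forall>\<^sub>F k in sequentially. (err k)\<^sup>2 / v k \<le> 4 * M * ((1 / cmod (\<gamma> k))\<^sup>2 * (1 / P k))"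
  using eventually_err_sq_le eventually_ge_at_top[of 2]
proof eventually_elim
  case (elim k)
  then have "(err k)\<^sup>2 / v k \<le> 4 * M * (w k / P k) / v k"
    using weight_pos[of k] by (intro divide_right_mono) auto
  also have "\<dots> = 4 * M * ((1 / cmod (\<gamma> k))\<^sup>2 * (1 / P k))"
    using weight_pos[of k] elim by (simp add: w_def power_divide)
  finally show ?case .
qed

lemma eventually_coef_bound_sq_div_weight_le:
  assumes "\<delta> > 0"
  shows "\<exists>K. \<forall>\<^sub>F k in sequentially.
           (coef_bound k)\<^sup>2 / v k \<le> K * (exp (2 * Q * \<delta>) * (1 + \<delta>) / q\<^sup>2) ^ k"
proof -
  obtain X where X: "X \<ge> 0" "\<And>k. k \<ge> 2 \<Longrightarrow> coef_bound k \<le> X * err k * exp (Q * \<delta>) ^ k"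
    using coef_bound_le_exponential[OF assms] by blast
  obtain C N where C: "\<And>k. k \<ge> N \<Longrightarrow> 1 / P k \<le> C * (1 + \<delta>) ^ k"
    using inverse_Ptail_le_exponential[OF assms] by blast
  define G where "G = q\<^sup>2 / cmod (\<gamma> 2)"
  have sq_power: "(x ^ k)\<^sup>2 = (x\<^sup>2) ^ k" for x :: real and k :: nat
    by (metis power_mult mult.commute)
  have exp_sq: "(exp (Q * \<delta>))\<^sup>2 = exp (2 * Q * \<delta>)"
    using exp_double[of "Q * \<delta>"] by (simp add: mult.assoc)
  have "\<forall>\<^sub>F k in sequentially.
          (coef_bound k)\<^sup>2 / v k \<le> (X\<^sup>2 * (4 * M) * G\<^sup>2 * C) * (exp (2 * Q * \<delta>) * (1 + \<delta>) / q\<^sup>2) ^ k"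
    using eventually_err_sq_div_weight_le eventually_ge_at_top[of "max 2 N"]
  proof eventually_elim
    case (elim k)
    then have k: "k \<ge> 2" "k \<ge> N" by auto
    have "(coef_bound k)\<^sup>2 \<le> (X * err k * exp (Q * \<delta>) ^ k)\<^sup>2"
      using X(2)[OF k(1)] coef_bound_nonneg by (intro power_mono) auto
    then have "(coef_bound k)\<^sup>2 / v k \<le> (X * err k * exp (Q * \<delta>) ^ k)\<^sup>2 / v k"
      using weight_pos[of k] k by (intro divide_right_mono) auto
    also have "\<dots> = X\<^sup>2 * (exp (Q * \<delta>) ^ k)\<^sup>2 * ((err k)\<^sup>2 / v k)"
      by (simp add: power_mult_distrib)
    also have "\<dots> \<le> X\<^sup>2 * (exp (Q * \<delta>) ^ k)\<^sup>2 * (4 * M * ((1 / cmod (\<gamma> k))\<^sup>2 * (1 / P k)))"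
      using elim by (intro mult_left_mono) auto
    also have "\<dots> \<le> X\<^sup>2 * (exp (Q * \<delta>) ^ k)\<^sup>2 * (4 * M * ((G * (1/q) ^ k)\<^sup>2 * (C * (1 + \<delta>) ^ k)))"
    proof -
      have "(1 / cmod (\<gamma> k))\<^sup>2 \<le> (G * (1/q) ^ k)\<^sup>2"
        using inverse_norm_le_geometric[OF k(1)] by (intro power_mono) (auto simp: G_def)
      then have "(1 / cmod (\<gamma> k))\<^sup>2 * (1 / P k) \<le> (G * (1/q) ^ k)\<^sup>2 * (C * (1 + \<delta>) ^ k)"
        using C[OF k(2)] Ptail_pos[of k] k by (intro mult_mono) auto
      then show ?thesis using M_pos by (intro mult_left_mono) auto
    qed
    also have "\<dots> = (X\<^sup>2 * (4 * M) * G\<^sup>2 * C) * (exp (2 * Q * \<delta>) * (1 + \<delta>) / q\<^sup>2) ^ k"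
      unfolding sq_power exp_sq by (simp add: power_mult_distrib power_divide sq_power mult_ac)
    finally show ?case .
  qed
  then show ?thesis by blast
qed

lemma summable_coef_bound_sq_div_weight: "summable (\<lambda>k. (coef_bound k)\<^sup>2 / v k)"
proof -
  obtain \<delta> where \<delta>: "\<delta> > 0" "exp (2 * Q * \<delta>) * (1 + \<delta>) < q"
    using exists_small_exponent by blast
  define r where "r = exp (2 * Q * \<delta>) * (1 + \<delta>) / q\<^sup>2"
  obtain K where K: "\<forall>\<^sub>F k in sequentially. (coef_bound k)\<^sup>2 / v k \<le> K * r ^ k"
    using eventually_coef_bound_sq_div_weight_le[OF \<delta>(1)] unfolding r_def by blast
  have "q < q\<^sup>2" using ratio_gt_1 by (simp add: power2_eq_square)
  then have "r < 1" "0 \<le> r" using \<delta> ratio_gt_1 by (simp_all add: r_def)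
  show ?thesis
  proof (rule summable_if_eventually_le_geometric[OF _ \<open>0 \<le> r\<close> \<open>r < 1\<close>])
    show "\<forall>\<^sub>F k in sequentially. norm ((coef_bound k)\<^sup>2 / v k) \<le> K * r ^ k"
      using K eventually_ge_at_top[of 1] by eventually_elim (simp add: weight_pos less_imp_le)
  qed
qed

lemma summable_coef_bound_div_dist:
  assumes m: "m \<ge> 2"
  shows "summable (\<lambda>k. coef_bound k / cmod (\<Lambda> m - \<gamma> k))"
proof -
  obtain \<delta> where \<delta>: "\<delta> > 0" "exp (2 * Q * \<delta>) * (1 + \<delta>) < q"
    using exists_small_exponent by blast
  obtain X where X: "X \<ge> 0" "\<And>k. k \<ge> 2 \<Longrightarrow> coef_bound k \<le> X * err k * exp (Q * \<delta>) ^ k"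
    using coef_bound_le_exponential[OF \<delta>(1)] by blast
  define G where "G = q\<^sup>2 / cmod (\<gamma> 2)"
  define r where "r = exp (Q * \<delta>) / q"
  have "exp (Q * \<delta>) \<le> exp (2 * Q * \<delta>)" using \<delta>(1) Q_gt_1 by simp
  also have "\<dots> \<le> exp (2 * Q * \<delta>) * (1 + \<delta>)" using \<delta>(1) by simp
  finally have "r < 1" "0 \<le> r" using \<delta>(2) ratio_gt_1 by (auto simp: r_def)
  show ?thesis
  proof (rule summable_if_eventually_le_geometric[OF _ \<open>0 \<le> r\<close> \<open>r < 1\<close>])
    show "\<forall>\<^sub>F k in sequentially. norm (coef_bound k / cmod (\<Lambda> m - \<gamma> k)) \<le> (2 * X * err_bound * G) * r ^ k"
      using eventually_norm_ge[of "2 * cmod (\<Lambda> m)"] eventually_ge_at_top[of 2]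
    proof eventually_elim
      case (elim k)
      have "cmod (\<gamma> k) > 0" using gamma_nonzero elim by simp
      have "cmod (\<gamma> k) - cmod (\<Lambda> m) \<le> cmod (\<Lambda> m - \<gamma> k)"
        by (metis norm_minus_commute norm_triangle_ineq2)
      then have far: "cmod (\<gamma> k) / 2 \<le> cmod (\<Lambda> m - \<gamma> k)" using elim by simp
      have "X * err k * exp (Q * \<delta>) ^ k \<le> X * err_bound * exp (Q * \<delta>) ^ k"
        using X(1) err_le_err_bound[of k] by (intro mult_right_mono mult_left_mono) auto
      then have "coef_bound k \<le> X * err_bound * exp (Q * \<delta>) ^ k" using X(2)[of k] elim by simp
      then have "coef_bound k / cmod (\<Lambda> m - \<gamma> k) \<le> (X * err_bound * exp (Q * \<delta>) ^ k) / (cmod (\<gamma> k) / 2)"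
        using far \<open>cmod (\<gamma> k) > 0\<close> coef_bound_nonneg X(1) err_bound_nonneg by (intro frac_le) auto
      also have "\<dots> = 2 * X * err_bound * exp (Q * \<delta>) ^ k * (1 / cmod (\<gamma> k))" by (simp add: field_simps)
      also have "\<dots> \<le> 2 * X * err_bound * exp (Q * \<delta>) ^ k * (G * (1/q) ^ k)"
        using inverse_norm_le_geometric[of k] elim X(1) err_bound_nonneg
        by (intro mult_left_mono) (auto simp: G_def)
      also have "\<dots> = (2 * X * err_bound * G) * r ^ k"
        by (simp add: r_def field_simps)
      finally show ?case using coef_bound_nonneg by simp
    qed
  qed
qed


lemma coef_div_sums_0:
  assumes m: "m \<ge> 2"
  shows "(\<lambda>k. coef (Suc k) / (\<Lambda> m - \<gamma> (Suc k))) sums 0"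
proof -
  define f where "f k N = (if k < N then coef_partial (Suc k) N / (\<Lambda> m - \<gamma> (Suc k)) else 0)" for k N
  define b where "b k = coef (Suc k) / (\<Lambda> m - \<gamma> (Suc k))" for k
  define bound where "bound k = coef_bound (Suc k) / cmod (\<Lambda> m - \<gamma> (Suc k))" for k
  have "(\<lambda>N. f k N) \<longlonglongrightarrow> b k" for k
  proof (rule Lim_transform_eventually)
    show "(\<lambda>N. coef_partial (Suc k) N / (\<Lambda> m - \<gamma> (Suc k))) \<longlonglongrightarrow> b k"
      unfolding b_def using Lambda_not_gamma[OF m, of "Suc k"]
      by (intro tendsto_divide tendsto_const coef_partial_tendsto) simp_all
    show "\<forall>\<^sub>F N in sequentially. coef_partial (Suc k) N / (\<Lambda> m - \<gamma> (Suc k)) = f k N"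
      using eventually_gt_at_top[of k] by eventually_elim (simp add: f_def)
  qed
  moreover have "\<forall>\<^sub>F (k, N) in at_top \<times>\<^sub>F sequentially. norm (f k N) \<le> bound k"
    using norm_coef_partial_le coef_bound_nonneg
    by (intro always_eventually) (auto simp: f_def bound_def norm_divide divide_right_mono)
  moreover have "summable bound"
    unfolding bound_def using summable_coef_bound_div_dist[OF m] by (subst summable_Suc_iff)
  ultimately have "summable (\<lambda>k. norm (b k))" and limit: "(\<lambda>N. \<Sum>k. f k N) \<longlonglongrightarrow> (\<Sum>k. b k)"
    using tannerys_theorem[OF _ _ _ sequentially_bot] by blast+
  have "\<forall>\<^sub>F N in sequentially. (\<Sum>k. f k N) = 0"
    using eventually_ge_at_top[of m]
  proof eventually_elim
    case (elim N)
    have "(\<Sum>k. f k N) = (\<Sum>k<N. coef_partial (Suc k) N / (\<Lambda> m - \<gamma> (Suc k)))"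
      by (subst suminf_finite[of "{..<N}"]) (auto simp: f_def)
    also have "\<dots> = (\<Sum>k\<in>{Suc 0..N}. coef_partial k N / (\<Lambda> m - \<gamma> k))"
      by (rule sum.atLeast1_atMost_eq[symmetric])
    also have "\<dots> = 0" using sum_coef_partial_eq_0[OF m elim] by simp
    finally show ?case .
  qed
  then have "(\<Sum>k. b k) = 0" using limit tendsto_eventually LIMSEQ_unique by metis
  moreover have "summable b" using \<open>summable (\<lambda>k. norm (b k))\<close> by (rule summable_norm_cancel)
  ultimately show ?thesis by (simp add: b_def[symmetric] summable_sums_iff)
qed

lemma l2v_coef_div_weight: "l2v v (\<lambda>j. coef j / v j)"
  unfolding l2v_def
proof (rule summable_comparison_test)
  show "summable (\<lambda>n. (coef_bound (Suc n))\<^sup>2 / v (Suc n))"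
    using summable_coef_bound_sq_div_weight by (subst summable_Suc_iff)
  have "norm ((cmod (coef (Suc n) / v (Suc n)))\<^sup>2 * v (Suc n)) \<le> (coef_bound (Suc n))\<^sup>2 / v (Suc n)" for n
  proof -
    have "norm ((cmod (coef (Suc n) / v (Suc n)))\<^sup>2 * v (Suc n)) = (cmod (coef (Suc n)))\<^sup>2 / v (Suc n)"
      using weight_pos[of "Suc n"] by (simp add: norm_divide power_divide power2_eq_square abs_mult)
    also have "\<dots> \<le> (coef_bound (Suc n))\<^sup>2 / v (Suc n)"
      using norm_coef_le[of "Suc n"] weight_pos[of "Suc n"] by (intro divide_right_mono power_mono) auto
    finally show ?thesis .
  qed
  then show "\<exists>N. \<forall>n\<ge>N. norm ((cmod (coef (Suc n) / v (Suc n)))\<^sup>2 * v (Suc n)) \<le> (coef_bound (Suc n))\<^sup>2 / v (Suc n)"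
    by simp
qed

lemma H_term_coef_div_weight_sums_0:
  assumes "m \<ge> 2"
  shows "H_term \<gamma> v (\<lambda>j. coef j / v j) (\<Lambda> m) sums 0"
proof -
  have "v (Suc k) \<noteq> 0" for k using weight_pos[of "Suc k"] by simp
  then have "H_term \<gamma> v (\<lambda>j. coef j / v j) (\<Lambda> m) = (\<lambda>k. coef (Suc k) / (\<Lambda> m - \<gamma> (Suc k)))"
    by (simp add: H_term_def fun_eq_iff)
  then show ?thesis using coef_div_sums_0[OF assms] by simp
qed

end

theorem lemma11:
  fixes \<gamma> :: "nat \<Rightarrow> complex" and v :: "nat \<Rightarrow> real" and \<Lambda> :: "nat \<Rightarrow> complex"
  assumes inj_gamma: "inj_on \<gamma> {1..}"
    and sep: "sep_ratio \<gamma>"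
    and weight: "weight_ok \<gamma> v"
    and small_o: "(\<lambda>n. v n / (cmod (\<gamma> n))\<^sup>2) \<in> o(Ptail \<gamma> v)"
    and inj_Lambda: "inj_on \<Lambda> {2..}"
    and nonzero: "\<forall>n\<ge>2. \<Lambda> n \<noteq> 0"
    and disjoint: "\<forall>n\<ge>2. \<forall>m\<ge>1. \<Lambda> n \<noteq> \<gamma> m"
    and mono: "\<forall>n\<ge>2. cmod (\<Lambda> n) \<le> cmod (\<Lambda> (Suc n))"
    and perturb: "\<exists>M. \<forall>\<^sub>F n in sequentially. \<Lambda> n \<in> Dset \<gamma> v M n"
  shows "\<exists>a :: nat \<Rightarrow> complex. l2v v a \<and> (\<exists>n\<ge>1. a n \<noteq> 0) \<and>
           (\<forall>n\<ge>2. H_term \<gamma> v a (\<Lambda> n) sums 0)"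
proof -
  obtain q where "q > 1" "\<forall>n\<ge>1. q * cmod (\<gamma> n) \<le> cmod (\<gamma> (Suc n))"
    using sep unfolding sep_ratio_def by blast
  moreover obtain M where "\<forall>\<^sub>F n in sequentially. \<Lambda> n \<in> Dset \<gamma> v M n"
    using perturb by blast
  ultimately interpret perturbation \<gamma> q v \<Lambda> M
    using inj_gamma weight small_o nonzero disjoint
    by unfold_locales (auto simp: weight_ok_def)
  have "(\<lambda>j. coef j / v j) 1 \<noteq> 0" using coef_1_nonzero weight_pos[of 1] by simp
  then show ?thesis
    using l2v_coef_div_weight H_term_coef_div_weight_sums_0 by blast
qed

end
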